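(* Let $\Omega\subseteq\mathbb{R}^n$ be open and let $\mathcal{F}\subseteq C(\Omega)$ be a set of continuous real functions on $\Omega$. Then the interval hull $\mathrm{hull}(\mathcal{F})$ is a D-continuous interval function.
   Context: $\overline{\mathbb{R}}=\mathbb{R}\cup\{\pm\infty\}$, $\mathbb{I}\overline{\mathbb{R}}$ is the set of closed intervals $[\underline a,\overline a]$ with $\underline a\le\overline a$ in $\overline{\mathbb{R}}$, $a\in\overline{\mathbb{R}}$ identified with $[a,a]$. $\mathbb{A}(X)$ is the set of functions $X\to\mathbb{I}\overline{\mathbb{R}}$, written $f=[\underline f,\overline f]$. A function $\psi=[\underline\psi,\overline\psi]\in\mathbb{A}(\Omega)$ is called continuous if $\underline\psi$ and $\overline\psi$ are continuous extended-real-valued functions. A continuous interval enclosure of $\mathcal{F}$ is a continuous $\psi\in\mathbb{A}(\Omega)$ with $\phi(x)\in\psi(x)$ for all $x\in\Omega$, $\phi\in\mathcal{F}$; with $\hat{\mathcal{F}}$ the set of all such enclosures, $\mathrm{hull}(\mathcal{F})(x)=\bigcap_{\psi\in\hat{\mathcal{F}}}\psi(x)$. $B_\delta(x)=\{y\in\Omega:\|x-y\|<\delta\}$. For dense $D\subseteq\Omega$ and $f\in\mathbb{A}(D)$: $I(D,\Omega,f)(x)=\sup_{\delta>0}\inf\{z\in f(y):y\in B_\delta(x)\cap D\}$, $S(D,\Omega,f)(x)=\inf_{\delta>0}\sup\{z\in f(y):y\in B_\delta(x)\cap D\}$, $F(D,\Omega,f)(x)=[I(D,\Omega,f)(x),S(D,\Omega,f)(x)]$.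 $f\in\mathbb{A}(\Omega)$ is D-continuous if $F(D,\Omega,f)=f$ for every dense subset $D$ of $\Omega$. *)

theory Defs
  imports "HOL-Analysis.Analysis"
begin

definition interval_fun :: "'a set \<Rightarrow> ('a \<Rightarrow> ereal set) \<Rightarrow> bool" where
  "interval_fun X f \<longleftrightarrow> (\<forall>x\<in>X. \<exists>a b. a \<le> b \<and> f x = {a..b})"

definition cont_interval_fun :: "'a::topological_space set \<Rightarrow> ('a \<Rightarrow> ereal set) \<Rightarrow> bool" where
  "cont_interval_fun \<Omega> \<psi> \<longleftrightarrow>
     (\<exists>l u. continuous_on \<Omega> l \<and> continuous_on \<Omega> u \<and>
            (\<forall>x\<in>\<Omega>. l x \<le> u x \<and> \<psi> x = {l x..u x}))"

definition enclosures :: "'a::topological_space set \<Rightarrow> ('a \<Rightarrow> real) set \<Rightarrow> ('a \<Rightarrow> ereal set) set" where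
  "enclosures \<Omega> \<F> = {\<psi>. cont_interval_fun \<Omega> \<psi> \<and> (\<forall>x\<in>\<Omega>. \<forall>\<phi>\<in>\<F>. ereal (\<phi> x) \<in> \<psi> x)}"

definition ihull :: "'a::topological_space set \<Rightarrow> ('a \<Rightarrow> real) set \<Rightarrow> 'a \<Rightarrow> ereal set" where
  "ihull \<Omega> \<F> x = (\<Inter>\<psi>\<in>enclosures \<Omega> \<F>. \<psi> x)"

definition Bd :: "'a::metric_space set \<Rightarrow> real \<Rightarrow> 'a \<Rightarrow> 'a set" where
  "Bd \<Omega> \<delta> x = {y\<in>\<Omega>. dist x y < \<delta>}"

definition Ilow :: "'a::metric_space set \<Rightarrow> 'a set \<Rightarrow> ('a \<Rightarrow> ereal set) \<Rightarrow> 'a \<Rightarrow> ereal" where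
  "Ilow D \<Omega> f x = (SUP \<delta>\<in>{0<..}. Inf {z. \<exists>y\<in>Bd \<Omega> \<delta> x \<inter> D. z \<in> f y})"

definition Supp :: "'a::metric_space set \<Rightarrow> 'a set \<Rightarrow> ('a \<Rightarrow> ereal set) \<Rightarrow> 'a \<Rightarrow> ereal" where
  "Supp D \<Omega> f x = (INF \<delta>\<in>{0<..}. Sup {z. \<exists>y\<in>Bd \<Omega> \<delta> x \<inter> D. z \<in> f y})"

definition Fop :: "'a::metric_space set \<Rightarrow> 'a set \<Rightarrow> ('a \<Rightarrow> ereal set) \<Rightarrow> 'a \<Rightarrow> ereal set" where
  "Fop D \<Omega> f x = {Ilow D \<Omega> f x .. Supp D \<Omega> f x}"

definition D_continuous :: "'a::metric_space set \<Rightarrow> ('a \<Rightarrow> ereal set) \<Rightarrow> bool" where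
  "D_continuous \<Omega> f \<longleftrightarrow>
     (\<forall>D. D \<subseteq> \<Omega> \<and> \<Omega> \<subseteq> closure D \<longrightarrow> (\<forall>x\<in>\<Omega>. Fop D \<Omega> f x = f x))"

end

theory Submission
  imports Defs
begin

text \<open>On \<open>\<Omega>\<close> the hull is the interval between the lower envelope \<open>L\<close>, the supremum of all
  continuous ereal minorants of \<open>\<F>\<close>, and the upper envelope \<open>U = - L(-\<F>)\<close>: enclosures with
  one infinite endpoint show that nothing smaller works. As a supremum of continuous functions
  \<open>L\<close> is lower semicontinuous, so \<open>L x\<close> is at most its lower limit along \<open>D\<close>. Conversely, if
  \<open>m\<close> is the infimum of \<open>L\<close> over \<open>B\<^sub>\<delta>(x) \<inter> D\<close>, then every \<open>\<phi> \<in> \<F>\<close> is \<open>\<ge> m\<close> on \<open>D\<close> near \<open>x\<close>, hence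
  by density and continuity on all of \<open>B\<^sub>\<delta>(x)\<close>; a continuous function equal to \<open>c < m\<close> at
  \<open>x\<close> and \<open>-\<infinity>\<close> off the ball is then a minorant, so \<open>L x \<ge> m\<close>. The upper endpoint follows
  by applying this to \<open>-\<F>\<close>.\<close>

lemma ereal_le_uminus_reorder: "a \<le> - b \<longleftrightarrow> b \<le> - (a::ereal)"
  using ereal_uminus_le_reorder[of "- a" "- b"] by simp

lemma continuous_on_uminus_ereal [continuous_intros]:
  "continuous_on A f \<Longrightarrow> continuous_on A (\<lambda>x. - f x :: ereal)"
  by (rule continuous_on_compose2[OF continuous_uminus_ereal]) auto

lemma ereal_uminus_atLeastAtMost: "uminus ` {a..b} = {- b..- (a::ereal)}"
proof (intro set_eqI iffI)
  fix z assume "z \<in> {- b..- a}"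
  then have "- z \<in> {a..b}"
    using ereal_minus_le_minus[of "- a" z] ereal_minus_le_minus[of z "- b"] by simp
  then show "z \<in> uminus ` {a..b}"
    by (rule rev_image_eqI) simp
qed auto

lemma continuous_on_ge_dense:
  fixes f :: "'a::topological_space \<Rightarrow> 'b::linorder_topology"
  assumes "open U" "continuous_on U f" "U \<subseteq> closure D"
    and "\<And>y. y \<in> U \<inter> D \<Longrightarrow> a \<le> f y" and "y \<in> U"
  shows "a \<le> f y"
proof -
  obtain C where C: "closed C" "U \<inter> f -` {a..} = U \<inter> C"
    using continuous_closedin_preimage[OF assms(2) closed_atLeast] closedin_closed by metis
  have "U \<inter> D \<subseteq> C"
    using assms(4) C(2) by blast
  then have "closure (U \<inter> D) \<subseteq> C"
    using C(1) by (rule closure_minimal)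
  moreover have "y \<in> closure (U \<inter> D)"
    using open_Int_closure_subset[OF assms(1)] assms(3,5) by blast
  ultimately show ?thesis
    using C(2) assms(5) by blast
qed

lemma ereal_bump_function:
  fixes x :: "'a::metric_space" and c \<delta> :: real
  assumes "\<delta> > 0"
  obtains l :: "'a \<Rightarrow> ereal"
  where "continuous_on UNIV l" "l x = ereal c" "\<And>y. l y \<le> ereal c"
    "\<And>y. \<delta> \<le> dist x y \<Longrightarrow> l y = -\<infinity>"
proof
  define p where "p y = ereal (max 0 (\<delta> - dist x y))" for y
  \<comment> \<open>\<open>inverse 0 = \<infinity>\<close> in ereal, so \<open>?l\<close> below is \<open>-\<infinity>\<close> off the ball\<close>
  let ?l = "\<lambda>y. - inverse (p y) + ereal (c + inverse \<delta>)"
  have "continuous_on UNIV p"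
    unfolding p_def by (intro continuous_intros)
  then have "continuous_on UNIV (\<lambda>y. inverse (p y))"
    by (rule continuous_on_compose2[OF continuous_on_inverse_ereal]) (auto simp: p_def zero_ereal_def)
  then show "continuous_on UNIV ?l"
    unfolding continuous_on_def by (intro ballI tendsto_add_left_ereal tendsto_uminus_ereal) auto
  show "?l x = ereal c"
    using assms by (simp add: p_def)
  show "?l y \<le> ereal c" for y
  proof (cases "dist x y < \<delta>")
    case True
    then have "inverse \<delta> \<le> inverse (\<delta> - dist x y)"
      using assms by (intro le_imp_inverse_le) auto
    then show ?thesis using True by (simp add: p_def)
  qed (simp add: p_def)
  show "?l y = -\<infinity>" if "\<delta> \<le> dist x y" for y
    using that by (simp add: p_def)
qed

lemma Bd_eq_Int_ball: "Bd \<Omega> \<delta> x = \<Omega> \<inter> ball x \<delta>"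
  by (auto simp: Bd_def)

lemma Ilow_cong:
  "(\<And>y. y \<in> \<Omega> \<Longrightarrow> f y = g y) \<Longrightarrow> Ilow D \<Omega> f x = Ilow D \<Omega> g x"
  unfolding Ilow_def Bd_def by (intro SUP_cong arg_cong[where f = Inf]) auto

lemma Supp_eq_uminus_Ilow: "Supp D \<Omega> f x = - Ilow D \<Omega> (\<lambda>y. uminus ` f y) x"
proof -
  have "{z. \<exists>y\<in>Bd \<Omega> \<delta> x \<inter> D. z \<in> uminus ` f y} = uminus ` {z. \<exists>y\<in>Bd \<Omega> \<delta> x \<inter> D. z \<in> f y}"
    for \<delta> by auto
  then show ?thesis
    unfolding Supp_def Ilow_def by (simp add: ereal_Inf_uminus_image_eq ereal_SUP_uminus_eq)
qed

lemma Ilow_eq_liminf_lower_endpoint: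
  assumes "\<And>y. y \<in> \<Omega> \<Longrightarrow> f y = {a y..b y} \<and> a y \<le> b y"
  shows "Ilow D \<Omega> f x = (SUP \<delta>\<in>{0<..}. INF y\<in>Bd \<Omega> \<delta> x \<inter> D. a y)"
proof -
  have "Inf {z. \<exists>y\<in>Bd \<Omega> \<delta> x \<inter> D. z \<in> f y} = (INF y\<in>Bd \<Omega> \<delta> x \<inter> D. a y)" for \<delta>
  proof (rule antisym)
    show "Inf {z. \<exists>y\<in>Bd \<Omega> \<delta> x \<inter> D. z \<in> f y} \<le> (INF y\<in>Bd \<Omega> \<delta> x \<inter> D. a y)"
      using assms by (intro INF_greatest Inf_lower) (auto simp: Bd_def)
    show "(INF y\<in>Bd \<Omega> \<delta> x \<inter> D. a y) \<le> Inf {z. \<exists>y\<in>Bd \<Omega> \<delta> x \<inter> D. z \<in> f y}"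
      using assms by (auto intro!: Inf_greatest INF_lower2 simp: Bd_def)
  qed
  then show ?thesis
    unfolding Ilow_def by simp
qed

definition lower_hull :: "'a::topological_space set \<Rightarrow> ('a \<Rightarrow> real) set \<Rightarrow> 'a \<Rightarrow> ereal" where
  "lower_hull \<Omega> F x =
     (SUP l\<in>{l. continuous_on \<Omega> l \<and> (\<forall>y\<in>\<Omega>. \<forall>\<phi>\<in>F. l y \<le> ereal (\<phi> y))}. l x)"

definition upper_hull :: "'a::topological_space set \<Rightarrow> ('a \<Rightarrow> real) set \<Rightarrow> 'a \<Rightarrow> ereal" where
  "upper_hull \<Omega> F x = - lower_hull \<Omega> ((\<lambda>\<phi> y. - \<phi> y) ` F) x"

lemma cont_interval_funI:
  "continuous_on \<Omega> l \<Longrightarrow> continuous_on \<Omega> u \<Longrightarrow> (\<And>x. x \<in> \<Omega> \<Longrightarrow> l x \<le> u x) \<Longrightarrow>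
    cont_interval_fun \<Omega> (\<lambda>x. {l x..u x})"
  unfolding cont_interval_fun_def by blast

lemma continuous_minorant_le_lower_hull:
  "continuous_on \<Omega> l \<Longrightarrow> (\<And>y \<phi>. y \<in> \<Omega> \<Longrightarrow> \<phi> \<in> F \<Longrightarrow> l y \<le> ereal (\<phi> y)) \<Longrightarrow>
    l x \<le> lower_hull \<Omega> F x"
  unfolding lower_hull_def by (rule SUP_upper) auto

lemma lower_hull_le_member: "\<phi> \<in> F \<Longrightarrow> x \<in> \<Omega> \<Longrightarrow> lower_hull \<Omega> F x \<le> ereal (\<phi> x)"
  unfolding lower_hull_def by (rule SUP_least) auto

lemma upper_hull_le_continuous_majorant:
  assumes "continuous_on \<Omega> u" "\<And>y \<phi>. y \<in> \<Omega> \<Longrightarrow> \<phi> \<in> F \<Longrightarrow> ereal (\<phi> y) \<le> u y"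
  shows "upper_hull \<Omega> F x \<le> u x"
proof -
  have "- u y \<le> ereal (- \<phi> y)" if "y \<in> \<Omega>" "\<phi> \<in> F" for y \<phi>
    using assms(2)[OF that] ereal_minus_le_minus[of "u y" "ereal (\<phi> y)"] by simp
  then have "- u x \<le> lower_hull \<Omega> ((\<lambda>\<phi> y. - \<phi> y) ` F) x"
    by (intro continuous_minorant_le_lower_hull continuous_on_uminus_ereal[OF assms(1)]) auto
  then show ?thesis
    unfolding upper_hull_def by (rule ereal_uminus_le_reorder[THEN iffD1])
qed

lemma member_le_upper_hull:
  assumes "\<phi> \<in> F" "x \<in> \<Omega>"
  shows "ereal (\<phi> x) \<le> upper_hull \<Omega> F x"
proof -
  have "lower_hull \<Omega> ((\<lambda>\<phi> y. - \<phi> y) ` F) x \<le> - ereal (\<phi> x)"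
    using lower_hull_le_member[of "\<lambda>y. - \<phi> y" _ x \<Omega>] assms by simp
  then show ?thesis
    unfolding upper_hull_def by (rule ereal_le_uminus_reorder[THEN iffD1])
qed

lemma lower_hull_le_upper_hull:
  assumes "F \<noteq> {}" "x \<in> \<Omega>"
  shows "lower_hull \<Omega> F x \<le> upper_hull \<Omega> F x"
proof -
  obtain \<phi> where \<phi>: "\<phi> \<in> F"
    using assms(1) by blast
  show ?thesis
    using lower_hull_le_member[OF \<phi> assms(2)] member_le_upper_hull[OF \<phi> assms(2)] by (rule order_trans)
qed

lemma lower_hull_uminus: "lower_hull \<Omega> ((\<lambda>\<phi> y. - \<phi> y) ` F) x = - upper_hull \<Omega> F x"
  unfolding upper_hull_def by simp

lemma upper_hull_uminus: "upper_hull \<Omega> ((\<lambda>\<phi> y. - \<phi> y) ` F) x = - lower_hull \<Omega> F x"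
  unfolding upper_hull_def by (simp add: image_image)

lemma lower_hull_le_ihull:
  assumes "z \<in> ihull \<Omega> F x"
  shows "lower_hull \<Omega> F x \<le> z"
  unfolding lower_hull_def
proof (rule SUP_least, clarify)
  fix l assume "continuous_on \<Omega> l" "\<forall>y\<in>\<Omega>. \<forall>\<phi>\<in>F. l y \<le> ereal (\<phi> y)"
  then have "(\<lambda>y. {l y..\<infinity>}) \<in> enclosures \<Omega> F"
    unfolding enclosures_def by (auto intro!: cont_interval_funI)
  then show "l x \<le> z"
    using assms unfolding ihull_def by auto
qed

lemma ihull_le_upper_hull:
  assumes "z \<in> ihull \<Omega> F x"
  shows "z \<le> upper_hull \<Omega> F x"
proof -
  have "lower_hull \<Omega> ((\<lambda>\<phi> y. - \<phi> y) ` F) x \<le> - z"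
    unfolding lower_hull_def
  proof (rule SUP_least, clarify)
    fix l assume "continuous_on \<Omega> l" "\<forall>y\<in>\<Omega>. \<forall>\<phi>\<in>(\<lambda>\<phi> y. - \<phi> y) ` F. l y \<le> ereal (\<phi> y)"
    then have "ereal (\<phi> y) \<le> - l y" if "y \<in> \<Omega>" "\<phi> \<in> F" for y \<phi>
      using that by (simp add: ereal_le_uminus_reorder[of "ereal (\<phi> y)"])
    then have "(\<lambda>y. {-\<infinity>..- l y}) \<in> enclosures \<Omega> F"
      unfolding enclosures_def using \<open>continuous_on \<Omega> l\<close>
      by (auto intro!: cont_interval_funI continuous_on_uminus_ereal)
    then have "z \<le> - l x"
      using assms unfolding ihull_def by auto
    then show "l x \<le> - z"
      by (rule ereal_le_uminus_reorder[THEN iffD1])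
  qed
  then show ?thesis
    unfolding upper_hull_def by (rule ereal_le_uminus_reorder[THEN iffD1])
qed

lemma hulls_subset_ihull:
  assumes "x \<in> \<Omega>"
  shows "{lower_hull \<Omega> F x..upper_hull \<Omega> F x} \<subseteq> ihull \<Omega> F x"
  unfolding ihull_def
proof (intro subsetI INT_I)
  fix z \<psi> assume z: "z \<in> {lower_hull \<Omega> F x..upper_hull \<Omega> F x}" and "\<psi> \<in> enclosures \<Omega> F"
  then obtain l u where "continuous_on \<Omega> l" "continuous_on \<Omega> u"
    and \<psi>: "\<forall>y\<in>\<Omega>. l y \<le> u y \<and> \<psi> y = {l y..u y}"
    and enclosed: "\<forall>y\<in>\<Omega>. \<forall>\<phi>\<in>F. ereal (\<phi> y) \<in> \<psi> y"
    unfolding enclosures_def cont_interval_fun_def by blast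
  have "l x \<le> lower_hull \<Omega> F x"
    using \<psi> enclosed by (intro continuous_minorant_le_lower_hull[OF \<open>continuous_on \<Omega> l\<close>]) auto
  moreover have "upper_hull \<Omega> F x \<le> u x"
    using \<psi> enclosed by (intro upper_hull_le_continuous_majorant[OF \<open>continuous_on \<Omega> u\<close>]) auto
  ultimately show "z \<in> \<psi> x"
    using z \<psi> assms by auto
qed

lemma ihull_eq_hulls:
  assumes "x \<in> \<Omega>"
  shows "ihull \<Omega> F x = {lower_hull \<Omega> F x..upper_hull \<Omega> F x}"
proof (rule antisym)
  show "ihull \<Omega> F x \<subseteq> {lower_hull \<Omega> F x..upper_hull \<Omega> F x}"
    using lower_hull_le_ihull ihull_le_upper_hull by auto
qed (rule hulls_subset_ihull[OF assms])

lemma lower_hull_le_liminf: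
  fixes \<Omega> :: "'a::metric_space set"
  assumes "x \<in> \<Omega>"
  shows "lower_hull \<Omega> F x \<le> (SUP \<delta>\<in>{0<..}. INF y\<in>Bd \<Omega> \<delta> x \<inter> D. lower_hull \<Omega> F y)"
proof (rule dense_le)
  fix c assume "c < lower_hull \<Omega> F x"
  then obtain l where l: "continuous_on \<Omega> l" "\<forall>y\<in>\<Omega>. \<forall>\<phi>\<in>F. l y \<le> ereal (\<phi> y)" and "c < l x"
    unfolding lower_hull_def less_SUP_iff by blast
  then have "eventually (\<lambda>y. c < l y) (at x within \<Omega>)"
    using assms by (intro order_tendstoD(1)) (auto simp: continuous_on_def)
  then obtain d where "d > 0" and d: "\<And>y. y \<in> \<Omega> \<Longrightarrow> y \<noteq> x \<Longrightarrow> dist y x < d \<Longrightarrow> c < l y"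
    unfolding eventually_at by blast
  have "c \<le> lower_hull \<Omega> F y" if "y \<in> Bd \<Omega> d x" for y
  proof -
    have "c < l y"
      using that d \<open>c < l x\<close> by (cases "y = x") (auto simp: Bd_def dist_commute)
    also have "l y \<le> lower_hull \<Omega> F y"
      using l by (intro continuous_minorant_le_lower_hull) auto
    finally show ?thesis by simp
  qed
  then have "c \<le> (INF y\<in>Bd \<Omega> d x \<inter> D. lower_hull \<Omega> F y)"
    by (auto intro: INF_greatest)
  also have "\<dots> \<le> (SUP \<delta>\<in>{0<..}. INF y\<in>Bd \<Omega> \<delta> x \<inter> D. lower_hull \<Omega> F y)"
    using \<open>d > 0\<close> by (intro SUP_upper) auto
  finally show "c \<le> \<dots>" .
qed

lemma liminf_le_lower_hull:
  fixes \<Omega> :: "'a::metric_space set"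
  assumes "open \<Omega>" and cont: "\<And>\<phi>. \<phi> \<in> F \<Longrightarrow> continuous_on \<Omega> \<phi>"
    and "\<Omega> \<subseteq> closure D" and "\<delta> > 0"
  shows "(INF y\<in>Bd \<Omega> \<delta> x \<inter> D. lower_hull \<Omega> F y) \<le> lower_hull \<Omega> F x"
    (is "?m \<le> _")
proof (rule dense_le)
  have m_le: "?m \<le> ereal (\<phi> y)" if "\<phi> \<in> F" "y \<in> Bd \<Omega> \<delta> x" for \<phi> y
  proof (rule continuous_on_ge_dense[where f = "\<lambda>y. ereal (\<phi> y)"])
    show "open (Bd \<Omega> \<delta> x)"
      using assms(1) by (simp add: Bd_eq_Int_ball open_Int)
    show "continuous_on (Bd \<Omega> \<delta> x) (\<lambda>y. ereal (\<phi> y))"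
      using cont[OF \<open>\<phi> \<in> F\<close>] by (intro continuous_on_ereal) (auto simp: Bd_def elim: continuous_on_subset)
    show "Bd \<Omega> \<delta> x \<subseteq> closure D"
      using assms(3) by (auto simp: Bd_def)
    show "?m \<le> ereal (\<phi> z)" if "z \<in> Bd \<Omega> \<delta> x \<inter> D" for z
    proof -
      have "?m \<le> lower_hull \<Omega> F z"
        using that by (rule INF_lower)
      also have "\<dots> \<le> ereal (\<phi> z)"
        using that \<open>\<phi> \<in> F\<close> by (intro lower_hull_le_member) (auto simp: Bd_def)
      finally show ?thesis .
    qed
  qed fact
  fix c assume "c < ?m"
  show "c \<le> lower_hull \<Omega> F x"
  proof (cases c)
    case (real r)
    obtain l :: "'a \<Rightarrow> ereal" where "continuous_on UNIV l" "l x = ereal r"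
      and "\<And>y. l y \<le> ereal r" and "\<And>y. \<delta> \<le> dist x y \<Longrightarrow> l y = -\<infinity>"
      using ereal_bump_function[OF \<open>\<delta> > 0\<close>, of x r] by blast
    have "l y \<le> ereal (\<phi> y)" if "y \<in> \<Omega>" "\<phi> \<in> F" for y \<phi>
    proof (cases "dist x y < \<delta>")
      case True
      have "l y \<le> c"
        using \<open>l y \<le> ereal r\<close> real by simp
      also have "\<dots> \<le> ?m"
        using \<open>c < ?m\<close> by simp
      also have "\<dots> \<le> ereal (\<phi> y)"
        using True that by (intro m_le) (auto simp: Bd_def)
      finally show ?thesis .
    qed (use \<open>\<And>y. \<delta> \<le> dist x y \<Longrightarrow> l y = -\<infinity>\<close> in simp)
    then have "l x \<le> lower_hull \<Omega> F x"
      using \<open>continuous_on UNIV l\<close> by (intro continuous_minorant_le_lower_hull) (auto elim: continuous_on_subset)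
    then show ?thesis
      using \<open>l x = ereal r\<close> real by simp
  qed (use \<open>c < ?m\<close> in auto)
qed

lemma liminf_lower_hull_eq:
  fixes \<Omega> :: "'a::metric_space set"
  assumes "open \<Omega>" "\<And>\<phi>. \<phi> \<in> F \<Longrightarrow> continuous_on \<Omega> \<phi>" "\<Omega> \<subseteq> closure D" "x \<in> \<Omega>"
  shows "(SUP \<delta>\<in>{0<..}. INF y\<in>Bd \<Omega> \<delta> x \<inter> D. lower_hull \<Omega> F y) = lower_hull \<Omega> F x"
  using assms by (intro antisym SUP_least liminf_le_lower_hull lower_hull_le_liminf) auto

lemma Ilow_ihull:
  fixes \<Omega> :: "'a::metric_space set"
  assumes "open \<Omega>" "\<And>\<phi>. \<phi> \<in> F \<Longrightarrow> continuous_on \<Omega> \<phi>" "F \<noteq> {}" "\<Omega> \<subseteq> closure D" "x \<in> \<Omega>"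
  shows "Ilow D \<Omega> (ihull \<Omega> F) x = lower_hull \<Omega> F x"
proof -
  have "Ilow D \<Omega> (ihull \<Omega> F) x = (SUP \<delta>\<in>{0<..}. INF y\<in>Bd \<Omega> \<delta> x \<inter> D. lower_hull \<Omega> F y)"
    using assms(3) by (intro Ilow_eq_liminf_lower_endpoint[where b = "upper_hull \<Omega> F"])
      (simp add: ihull_eq_hulls lower_hull_le_upper_hull)
  also have "\<dots> = lower_hull \<Omega> F x"
    using assms by (intro liminf_lower_hull_eq)
  finally show ?thesis .
qed

lemma Supp_ihull:
  fixes \<Omega> :: "'a::metric_space set"
  assumes "open \<Omega>" "\<And>\<phi>. \<phi> \<in> F \<Longrightarrow> continuous_on \<Omega> \<phi>"
    and "F \<noteq> {}" "\<Omega> \<subseteq> closure D" "x \<in> \<Omega>"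
  shows "Supp D \<Omega> (ihull \<Omega> F) x = upper_hull \<Omega> F x"
proof -
  let ?G = "(\<lambda>\<phi> y. - \<phi> y) ` F"
  have "uminus ` ihull \<Omega> F y = ihull \<Omega> ?G y" if "y \<in> \<Omega>" for y
    using that
    by (simp add: ihull_eq_hulls lower_hull_uminus upper_hull_uminus ereal_uminus_atLeastAtMost)
  then have "Supp D \<Omega> (ihull \<Omega> F) x = - Ilow D \<Omega> (ihull \<Omega> ?G) x"
    by (simp add: Supp_eq_uminus_Ilow cong: Ilow_cong)
  also have "Ilow D \<Omega> (ihull \<Omega> ?G) x = lower_hull \<Omega> ?G x"
    using assms by (intro Ilow_ihull) (auto intro: continuous_intros)
  finally show ?thesis
    by (simp add: lower_hull_uminus)
qed

theorem theorem20:
  fixes \<Omega> :: "(real^'n) set" and \<F> :: "((real^'n) \<Rightarrow> real) set"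
  assumes "open \<Omega>"
    and "\<And>\<phi>. \<phi> \<in> \<F> \<Longrightarrow> continuous_on \<Omega> \<phi>"
    and "\<F> \<noteq> {}"
  shows "interval_fun \<Omega> (ihull \<Omega> \<F>) \<and> D_continuous \<Omega> (ihull \<Omega> \<F>)"
proof
  show "interval_fun \<Omega> (ihull \<Omega> \<F>)"
    unfolding interval_fun_def
    using ihull_eq_hulls lower_hull_le_upper_hull[OF assms(3)] by blast
  show "D_continuous \<Omega> (ihull \<Omega> \<F>)"
    unfolding D_continuous_def
  proof (intro allI impI ballI)
    fix D x assume "D \<subseteq> \<Omega> \<and> \<Omega> \<subseteq> closure D" "x \<in> \<Omega>"
    then show "Fop D \<Omega> (ihull \<Omega> \<F>) x = ihull \<Omega> \<F> x"
      unfolding Fop_def by (simp add: Ilow_ihull[OF assms] Supp_ihull[OF assms] ihull_eq_hulls)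
  qed
qed

end
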